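(* There exist instances (users, nonnegative embedding weights, features, and a linear graph-based classifier) of the myopic best-response dynamics described below, a user $i$, and a round $t$ such that $\hat y_i^{(t)}=-1$, user $i$ does not move (i.e., $x_i^{(t+1)}=x_i^{(t)}$), yet $\hat y_i^{(t+1)}=+1$.
   Context: Users $i\in[n]$ have features $x_i\in\mathbb{R}^\ell$; embeddings $\phi(x_i;x_{-i})=\widetilde{w}_{ii}x_i+\sum_{j\neq i}\widetilde{w}_{ji}x_j$ with $\widetilde{w}_{ji}\ge0$. Classifier: $h_{\theta,b}(x_i;x_{-i})=\mathrm{sign}(\theta^\top\phi(x_i;x_{-i})+b)$, $\mathrm{sign}(0)=+1$. Cost $c(x,x')=\|x-x'\|_2$. Dynamics: $x_i^{(0)}=x_i$; at each round all users update concurrently; user $i$ changes her features only if she is currently classified $-1$ and some $x'$ with $h(x';x^{(t)}_{-i})=+1$ has $c(x_i^{(t)},x')\le2$, in which case she moves to the minimum-cost such point (embedding exactly on the decision boundary); otherwise she stays. Predictions: $\hat y_i^{(t)}=h(x_i^{(t)};x_{-i}^{(t)})$. *)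

theory Defs
  imports Complex_Main
begin

text \<open>Users are indexed by 0..n-1; features live in R^l, represented as
functions nat => real that vanish outside {0..<l}. A profile X :: nat => nat => real
gives X i = feature vector of user i. Weights W j i stand for w~_{ji}.\<close>

definition vecs :: "nat \<Rightarrow> (nat \<Rightarrow> real) set" where
  "vecs l = {x. \<forall>k\<ge>l. x k = 0}"

definition cost :: "nat \<Rightarrow> (nat \<Rightarrow> real) \<Rightarrow> (nat \<Rightarrow> real) \<Rightarrow> real" where
  "cost l x y = sqrt (\<Sum>k<l. (x k - y k)^2)"

definition emb :: "nat \<Rightarrow> (nat \<Rightarrow> nat \<Rightarrow> real) \<Rightarrow> (nat \<Rightarrow> nat \<Rightarrow> real) \<Rightarrow> nat \<Rightarrow> (nat \<Rightarrow> real)" where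
  "emb n W X i = (\<lambda>k. \<Sum>j<n. W j i * X j k)"

definition clf :: "nat \<Rightarrow> nat \<Rightarrow> (nat \<Rightarrow> nat \<Rightarrow> real) \<Rightarrow> (nat \<Rightarrow> real) \<Rightarrow> real
    \<Rightarrow> (nat \<Rightarrow> nat \<Rightarrow> real) \<Rightarrow> nat \<Rightarrow> int" where
  "clf l n W theta b X i =
     (if (\<Sum>k<l. theta k * emb n W X i k) + b \<ge> 0 then 1 else -1)"

definition feasible :: "nat \<Rightarrow> nat \<Rightarrow> (nat \<Rightarrow> nat \<Rightarrow> real) \<Rightarrow> (nat \<Rightarrow> real) \<Rightarrow> real
    \<Rightarrow> (nat \<Rightarrow> nat \<Rightarrow> real) \<Rightarrow> nat \<Rightarrow> (nat \<Rightarrow> real) \<Rightarrow> bool" where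
  "feasible l n W theta b X i x' \<longleftrightarrow>
     x' \<in> vecs l \<and> clf l n W theta b (X(i := x')) i = 1 \<and> cost l (X i) x' \<le> 2"

definition best_resp :: "nat \<Rightarrow> nat \<Rightarrow> (nat \<Rightarrow> nat \<Rightarrow> real) \<Rightarrow> (nat \<Rightarrow> real) \<Rightarrow> real
    \<Rightarrow> (nat \<Rightarrow> nat \<Rightarrow> real) \<Rightarrow> nat \<Rightarrow> (nat \<Rightarrow> real) \<Rightarrow> bool" where
  "best_resp l n W theta b X i x' \<longleftrightarrow>
     feasible l n W theta b X i x' \<and>
     (\<forall>y. feasible l n W theta b X i y \<longrightarrow> cost l (X i) x' \<le> cost l (X i) y)"

definition step :: "nat \<Rightarrow> nat \<Rightarrow> (nat \<Rightarrow> nat \<Rightarrow> real) \<Rightarrow> (nat \<Rightarrow> real) \<Rightarrow> real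
    \<Rightarrow> (nat \<Rightarrow> nat \<Rightarrow> real) \<Rightarrow> (nat \<Rightarrow> nat \<Rightarrow> real) \<Rightarrow> bool" where
  "step l n W theta b X Y \<longleftrightarrow>
     (\<forall>i<n. if clf l n W theta b X i = -1 \<and> (\<exists>x'. feasible l n W theta b X i x')
            then best_resp l n W theta b X i (Y i)
            else Y i = X i)"

definition trajectory :: "nat \<Rightarrow> nat \<Rightarrow> (nat \<Rightarrow> nat \<Rightarrow> real) \<Rightarrow> (nat \<Rightarrow> real) \<Rightarrow> real
    \<Rightarrow> (nat \<Rightarrow> nat \<Rightarrow> nat \<Rightarrow> real) \<Rightarrow> bool" where
  "trajectory l n W theta b Xs \<longleftrightarrow>
     theta \<in> vecs l \<and> (\<forall>i<n. \<forall>j<n. W j i \<ge> 0) \<and> (\<forall>i<n. Xs 0 i \<in> vecs l) \<and>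
     (\<forall>t. step l n W theta b (Xs t) (Xs (Suc t)))"

end

theory Submission
  imports Defs
begin

text \<open>One feature, two users, threshold \<open>\<theta>\<^sup>\<top>\<phi> \<ge> 0\<close>. User 0's embedding is her own
feature plus 20 times user 1's. Initially user 0 sits at 0 and user 1 at -1, so both are
classified -1; user 0's score is -20, which she cannot raise to 0 within budget 2, so she
stays. User 1 moves to 0 at cost 1. In the next round everybody is at 0, every score is 0,
and user 0 is classified +1 although she never moved.\<close>

lemma cost_one_dim: "cost (Suc 0) x y = \<bar>x 0 - y 0\<bar>"
  by (simp add: cost_def)

lemma emb_two_users: "emb 2 W X i k = W 0 i * X 0 k + W 1 i * X 1 k"
  by (simp add: emb_def numeral_2_eq_2)

lemma clf_one_dim:
  "clf (Suc 0) n W theta b X i = (if theta 0 * emb n W X i 0 + b \<ge> 0 then 1 else -1)"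
  by (simp add: clf_def)

lemma step_refl_if_all_positive:
  assumes "\<forall>i<n. clf l n W theta b X i = 1"
  shows "step l n W theta b X X"
  using assms by (simp add: step_def)

lemma trajectory_two_phase:
  assumes "theta \<in> vecs l" and "\<forall>i<n. \<forall>j<n. W j i \<ge> 0" and "\<forall>i<n. X i \<in> vecs l"
    and "step l n W theta b X Y" and "step l n W theta b Y Y"
  shows "trajectory l n W theta b (\<lambda>t. if t = 0 then X else Y)"
  using assms by (simp add: trajectory_def)

definition example_W :: "nat \<Rightarrow> nat \<Rightarrow> real" where
  "example_W j i = (if j = 0 \<and> i = 0 then 1 else if j = 1 \<and> i = 0 then 20
                    else if j = 1 \<and> i = 1 then 1 else 0)"

definition example_theta :: "nat \<Rightarrow> real" where
  "example_theta k = (if k = 0 then 1 else 0)"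

definition example_start :: "nat \<Rightarrow> nat \<Rightarrow> real" where
  "example_start i k = (if i = 1 \<and> k = 0 then -1 else 0)"

abbreviation example_clf :: "(nat \<Rightarrow> nat \<Rightarrow> real) \<Rightarrow> nat \<Rightarrow> int" where
  "example_clf \<equiv> clf (Suc 0) 2 example_W example_theta 0"

abbreviation example_feasible :: "(nat \<Rightarrow> nat \<Rightarrow> real) \<Rightarrow> nat \<Rightarrow> (nat \<Rightarrow> real) \<Rightarrow> bool" where
  "example_feasible \<equiv> feasible (Suc 0) 2 example_W example_theta 0"

abbreviation example_step :: "(nat \<Rightarrow> nat \<Rightarrow> real) \<Rightarrow> (nat \<Rightarrow> nat \<Rightarrow> real) \<Rightarrow> bool" where
  "example_step \<equiv> step (Suc 0) 2 example_W example_theta 0"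

lemma example_clf_eq:
  "example_clf X i = (if example_W 0 i * X 0 0 + example_W 1 i * X 1 0 \<ge> 0 then 1 else -1)"
  by (simp add: clf_one_dim emb_two_users example_theta_def)

lemma example_user0_infeasible: "\<not> example_feasible example_start 0 y"
proof
  assume "example_feasible example_start 0 y"
  then have "y 0 \<ge> 20" and "\<bar>y 0\<bar> \<le> 2"
    by (auto simp: feasible_def example_clf_eq cost_one_dim example_W_def example_start_def
        split: if_splits)
  then show False by linarith
qed

lemma example_user1_feasible_iff:
  "example_feasible example_start (Suc 0) y \<longleftrightarrow> y \<in> vecs 1 \<and> y 0 \<ge> 0 \<and> \<bar>1 + y 0\<bar> \<le> 2"
  by (auto simp: feasible_def example_clf_eq cost_one_dim example_W_def example_start_def
      split: if_splits)

lemma example_user1_moves_to_zero: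
  "best_resp (Suc 0) 2 example_W example_theta 0 example_start (Suc 0) (\<lambda>_. 0)"
  by (auto simp: best_resp_def example_user1_feasible_iff vecs_def cost_one_dim
      example_start_def)

lemma example_first_step: "example_step example_start (\<lambda>_ _. 0)"
proof -
  have "example_clf example_start (Suc 0) = -1"
    by (simp add: example_clf_eq example_W_def example_start_def)
  moreover have "example_feasible example_start (Suc 0) (\<lambda>_. 0)"
    using example_user1_moves_to_zero by (simp add: best_resp_def)
  moreover have "i = 0 \<or> i = Suc 0" if "i < 2" for i :: nat
    using that by auto
  ultimately show ?thesis
    using example_user0_infeasible example_user1_moves_to_zero
    unfolding step_def by (auto simp: example_start_def fun_eq_iff)
qed

lemma example_second_step: "example_step (\<lambda>_ _. 0) (\<lambda>_ _. 0)"
  by (rule step_refl_if_all_positive) (simp add: example_clf_eq)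

theorem proposition2:
  shows "\<exists>l n W theta b Xs i t. trajectory l n W theta b Xs \<and> i < n \<and>
           clf l n W theta b (Xs t) i = -1 \<and>
           Xs (Suc t) i = Xs t i \<and>
           clf l n W theta b (Xs (Suc t)) i = 1"
proof -
  define Xs where "Xs = (\<lambda>t::nat. if t = 0 then example_start else (\<lambda>_ _. 0))"
  have "trajectory 1 2 example_W example_theta 0 Xs"
    unfolding Xs_def
    by (rule trajectory_two_phase)
      (auto simp: vecs_def example_theta_def example_W_def example_start_def
        intro: example_first_step example_second_step)
  moreover have "example_clf (Xs 0) 0 = -1"
    by (simp add: Xs_def example_clf_eq example_W_def example_start_def)
  moreover have "Xs 1 0 = Xs 0 0"
    by (simp add: Xs_def example_start_def fun_eq_iff)
  moreover have "example_clf (Xs 1) 0 = 1"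
    by (simp add: Xs_def example_clf_eq)
  ultimately show ?thesis
    by (intro exI[of _ 1] exI[of _ 2] exI[of _ example_W] exI[of _ example_theta]
        exI[of _ 0] exI[of _ Xs] exI[of _ "0::nat"]) simp
qed

end
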